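(* Let $\kappa\ge2$. The model $\mathrm{EE}_\kappa(((a,b),c))$ is contained in the real algebraic variety defined by the degree-$(\kappa+1)$ polynomials in the entries of $P$ given by the entries of the $2\kappa$ matrix expressions, for $k\in[\kappa]$, $$P_{+\cdot\cdot}\operatorname{Cof}(P_{\cdot+\cdot})^TP_{\cdot\cdot k}-P_{\cdot\cdot k}^T\operatorname{Cof}(P_{\cdot+\cdot})P_{+\cdot\cdot}^T,\qquad P_{\cdot\cdot k}\operatorname{Cof}(P_{+\cdot\cdot})P_{\cdot+\cdot}^T-P_{\cdot+\cdot}\operatorname{Cof}(P_{+\cdot\cdot})^TP_{\cdot\cdot k}^T.$$
   Context: A $\kappa$-state site pattern probability tensor on $X$ ($|X|=n$) is an $n$-way $\kappa\times\cdots\times\kappa$ array with one index per taxon, non-negative entries summing to 1. $P_Y$ is the marginalization to $Y\subseteq X$; $\psi^+|_Y$ is the induced rooted subtree; a 2-clade is a pair of leaves that are exactly the leaf descendants of some vertex. $\mathrm{UE}_\kappa(\psi^+)$: all such tensors $P$ such that for every $Y\subseteq X$ and every 2-clade $\{x,y\}$ of $\psi^+|_Y$, $P_Y$ is invariant under exchanging the $x$ and $y$ indices. For a $\kappa\times\kappa$ matrix $M$, $P*_kM$ is the tensor whose entry at $(i_1,\dots,i_n)$ is the $i_k$-th entry of $vM$, $v$ the row vector obtained by fixing all indices $\ell\ne k$ to $i_\ell$; $P*(M_1,\dots,M_n)=(\cdots(P*_1M_1)\cdots)*_nM_n$. $\mathrm{EE}_\kappa(\psi^+)$: all $\kappa$-state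 site pattern probability tensors $P$ such that $P*(M_1,\dots,M_n)=\tilde P$ for some non-singular Markov matrices $M_i$ and some non-negative $\tilde P\in\mathrm{UE}_\kappa(\psi^+)$. For a 3-way tensor $P=(p_{ijk})$ with indices ordered $a,b,c$: $P_{+\cdot\cdot}$ has $(j,k)$-entry $\sum_ip_{ijk}$; $P_{\cdot+\cdot}$ has $(i,k)$-entry $\sum_jp_{ijk}$; $P_{\cdot\cdot k}$ has $(i,j)$-entry $p_{ijk}$. $\operatorname{Cof}(A)$ is the matrix of cofactors of $A$; $^T$ is transpose. *)

theory Defs
  imports Main "Jordan_Normal_Form.Determinant"
begin

text \<open>Taxa: a = 0, b = 1, c = 2; X = {0,1,2}.  A kappa-state tensor on X is a real function
  on index assignments s : X \<rightarrow> {0..<kappa} (elements of PiE X).\<close>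

definition taxa :: "nat set" where "taxa = {0,1,2}"

definition states :: "nat \<Rightarrow> nat set \<Rightarrow> (nat \<Rightarrow> nat) set" where
  "states \<kappa> Y = PiE Y (\<lambda>_. {..<\<kappa>})"

definition site_pattern_tensor :: "nat \<Rightarrow> ((nat \<Rightarrow> nat) \<Rightarrow> real) \<Rightarrow> bool" where
  "site_pattern_tensor \<kappa> P \<longleftrightarrow>
     (\<forall>s\<in>states \<kappa> taxa. 0 \<le> P s) \<and> (\<Sum>s\<in>states \<kappa> taxa. P s) = 1"

definition marg :: "nat \<Rightarrow> nat set \<Rightarrow> ((nat \<Rightarrow> nat) \<Rightarrow> real) \<Rightarrow> (nat \<Rightarrow> nat) \<Rightarrow> real" where
  "marg \<kappa> Y P s = (\<Sum>t\<in>{t\<in>states \<kappa> taxa. restrict t Y = s}. P t)"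

text \<open>Clusters (leaf-descendant sets of vertices) of the rooted tree ((a,b),c); the clusters of the
  induced rooted subtree on Y are the nonempty intersections with Y; a 2-clade is a cluster
  of cardinality two.\<close>
definition tree_clusters :: "nat set set" where
  "tree_clusters = {{0}, {1}, {2}, {0,1}, {0,1,2}}"

definition two_clades :: "nat set \<Rightarrow> nat set set" where
  "two_clades Y = {C \<inter> Y | C. C \<in> tree_clusters \<and> card (C \<inter> Y) = 2}"

definition UE :: "nat \<Rightarrow> ((nat \<Rightarrow> nat) \<Rightarrow> real) set" where
  "UE \<kappa> = {P. site_pattern_tensor \<kappa> P \<and>
     (\<forall>Y\<subseteq>taxa. \<forall>x y. {x, y} \<in> two_clades Y \<longrightarrow>
        (\<forall>s\<in>states \<kappa> Y. marg \<kappa> Y P (s(x := s y, y := s x)) = marg \<kappa> Y P s))}"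

definition markov :: "nat \<Rightarrow> real mat \<Rightarrow> bool" where
  "markov \<kappa> M \<longleftrightarrow> M \<in> carrier_mat \<kappa> \<kappa> \<and>
     (\<forall>i<\<kappa>. \<forall>j<\<kappa>. 0 \<le> M $$ (i,j)) \<and> (\<forall>i<\<kappa>. (\<Sum>j<\<kappa>. M $$ (i,j)) = 1)"

definition act :: "nat \<Rightarrow> ((nat \<Rightarrow> nat) \<Rightarrow> real) \<Rightarrow> nat \<Rightarrow> real mat \<Rightarrow> (nat \<Rightarrow> nat) \<Rightarrow> real" where
  "act \<kappa> P k M i = (\<Sum>j<\<kappa>. P (i(k := j)) * M $$ (j, i k))"

definition EE :: "nat \<Rightarrow> ((nat \<Rightarrow> nat) \<Rightarrow> real) set" where
  "EE \<kappa> = {P. site_pattern_tensor \<kappa> P \<and>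
     (\<exists>M0 M1 M2 Pt. markov \<kappa> M0 \<and> markov \<kappa> M1 \<and> markov \<kappa> M2 \<and>
        det M0 \<noteq> 0 \<and> det M1 \<noteq> 0 \<and> det M2 \<noteq> 0 \<and>
        Pt \<in> UE \<kappa> \<and> (\<forall>s\<in>states \<kappa> taxa. 0 \<le> Pt s) \<and>
        (\<forall>s\<in>states \<kappa> taxa. act \<kappa> (act \<kappa> (act \<kappa> P 0 M0) 1 M1) 2 M2 s = Pt s))}"

definition ent :: "((nat \<Rightarrow> nat) \<Rightarrow> real) \<Rightarrow> nat \<Rightarrow> nat \<Rightarrow> nat \<Rightarrow> real" where
  "ent P i j k = P ((\<lambda>_. undefined)(0 := i, 1 := j, 2 := k))"

definition marg_a :: "nat \<Rightarrow> ((nat \<Rightarrow> nat) \<Rightarrow> real) \<Rightarrow> real mat" where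
  "marg_a \<kappa> P = mat \<kappa> \<kappa> (\<lambda>(j,k). \<Sum>i<\<kappa>. ent P i j k)"

definition marg_b :: "nat \<Rightarrow> ((nat \<Rightarrow> nat) \<Rightarrow> real) \<Rightarrow> real mat" where
  "marg_b \<kappa> P = mat \<kappa> \<kappa> (\<lambda>(i,k). \<Sum>j<\<kappa>. ent P i j k)"

definition slice_c :: "nat \<Rightarrow> ((nat \<Rightarrow> nat) \<Rightarrow> real) \<Rightarrow> nat \<Rightarrow> real mat" where
  "slice_c \<kappa> P k = mat \<kappa> \<kappa> (\<lambda>(i,j). ent P i j k)"

definition cof :: "real mat \<Rightarrow> real mat" where
  "cof A = mat (dim_row A) (dim_col A) (\<lambda>(i,j). cofactor A i j)"

end

theory Submission
  imports Defs
begin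

text \<open>
  Write \<open>P * (A, B, C) = P'\<close> with \<open>P'\<close> invariant under exchanging a and b. The c-slices of
  \<open>P'\<close> are \<open>\<Sum>\<^sub>n C(n,k) Z\<^sub>n\<close> with \<open>Z\<^sub>n = A\<^sup>T P_{..n} B\<close>, so invertibility of \<open>C\<close> makes every
  \<open>Z\<^sub>n\<close> symmetric. Comparing row and column sums of \<open>Z\<^sub>n\<close>, using that \<open>A\<close> and \<open>B\<close> are
  stochastic, gives \<open>A\<^sup>T P_{.+.} = B\<^sup>T P_{+..}\<close>. Hence
  \<open>B\<^sup>T (P_{+..} adj(P_{.+.}) P_{..k}) B = det(P_{.+.}) Z\<^sub>k\<close> is symmetric, and as \<open>B\<close> is
  invertible so is \<open>P_{+..} adj(P_{.+.}) P_{..k}\<close>; since \<open>adj = Cof\<^sup>T\<close> this is the first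
  identity. The second is the first with the roles of a and b exchanged.
\<close>

lemma transpose_smult_mat: "(c \<cdot>\<^sub>m A)\<^sup>T = c \<cdot>\<^sub>m A\<^sup>T"
  by (rule eq_matI) auto

lemma transpose_cof: "A \<in> carrier_mat n n \<Longrightarrow> (cof A)\<^sup>T = adj_mat A"
  by (rule eq_matI) (auto simp: cof_def adj_mat_def)

lemma symmetric_of_congruence_symmetric:
  fixes M X :: "'a::idom mat"
  assumes M: "M \<in> carrier_mat n n" and X: "X \<in> carrier_mat n n" and "det M \<noteq> 0"
    and sym: "(M\<^sup>T * X * M)\<^sup>T = M\<^sup>T * X * M"
  shows "X\<^sup>T = X"
proof -
  let ?N = "adj_mat M" and ?d = "det M"
  have N: "?N \<in> carrier_mat n n" and MN: "M * ?N = ?d \<cdot>\<^sub>m 1\<^sub>m n"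
    using adj_mat[OF M] by auto
  have adj_undoes_congruence: "?N\<^sup>T * (M\<^sup>T * Y * M) * ?N = (?d * ?d) \<cdot>\<^sub>m Y"
    if Y: "Y \<in> carrier_mat n n" for Y
  proof -
    have "?N\<^sup>T * (M\<^sup>T * Y * M) * ?N = (M * ?N)\<^sup>T * Y * (M * ?N)"
      using M N Y by (simp add: transpose_mult[of _ n n _ n] assoc_mult_mat[of _ n n _ n _ n])
    also have "\<dots> = (?d * ?d) \<cdot>\<^sub>m Y"
      using Y unfolding MN by (auto intro!: eq_matI)
    finally show ?thesis .
  qed
  have "M\<^sup>T * X\<^sup>T * M = (M\<^sup>T * X * M)\<^sup>T"
    using M X by (simp add: transpose_mult[of _ n n _ n] assoc_mult_mat[of _ n n _ n _ n])
  then have "(?d * ?d) \<cdot>\<^sub>m X\<^sup>T = (?d * ?d) \<cdot>\<^sub>m X"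
    using adj_undoes_congruence[of X] adj_undoes_congruence[of "X\<^sup>T"] sym X by simp
  moreover have "?d * ?d \<noteq> 0" using assms(3) by simp
  ultimately show ?thesis
    using X by (auto simp: mat_eq_iff)
qed

lemma symmetric_mult_adj_mat:
  fixes A B Q R S :: "'a::idom mat"
  assumes A: "A \<in> carrier_mat n n" and B: "B \<in> carrier_mat n n"
    and Q: "Q \<in> carrier_mat n n" and R: "R \<in> carrier_mat n n" and S: "S \<in> carrier_mat n n"
    and "det B \<noteq> 0" and AR: "A\<^sup>T * R = B\<^sup>T * Q" and sym: "(A\<^sup>T * S * B)\<^sup>T = A\<^sup>T * S * B"
  shows "(Q * adj_mat R * S)\<^sup>T = Q * adj_mat R * S"
proof (rule symmetric_of_congruence_symmetric[OF B _ \<open>det B \<noteq> 0\<close>])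
  have adjR: "adj_mat R \<in> carrier_mat n n" "R * adj_mat R = det R \<cdot>\<^sub>m 1\<^sub>m n"
    using adj_mat[OF R] by auto
  note assoc = assoc_mult_mat[of _ n n _ n _ n]
  have "B\<^sup>T * (Q * adj_mat R * S) * B = (B\<^sup>T * Q) * adj_mat R * (S * B)"
    using B Q S adjR by (simp add: assoc)
  also have "\<dots> = A\<^sup>T * (R * adj_mat R) * (S * B)"
    using A R S B adjR by (simp add: AR[symmetric] assoc)
  also have "\<dots> = det R \<cdot>\<^sub>m (A\<^sup>T * S * B)"
    using A S B unfolding adjR(2)
    by (simp add: assoc mult_smult_distrib[of _ n n _ n] mult_smult_assoc_mat[of _ n n _ n])
  finally have "B\<^sup>T * (Q * adj_mat R * S) * B = det R \<cdot>\<^sub>m (A\<^sup>T * S * B)" .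
  then show "(B\<^sup>T * (Q * adj_mat R * S) * B)\<^sup>T = B\<^sup>T * (Q * adj_mat R * S) * B"
    by (simp add: transpose_smult_mat sym)
qed (use Q R S adj_mat[OF R] in auto)

lemma cof_carrier_mat: "A \<in> carrier_mat n n \<Longrightarrow> cof A \<in> carrier_mat n n"
  by (simp add: cof_def)

lemma cof_commutation_identities:
  fixes A B Q R S :: "real mat"
  assumes A: "A \<in> carrier_mat n n" and B: "B \<in> carrier_mat n n"
    and Q: "Q \<in> carrier_mat n n" and R: "R \<in> carrier_mat n n" and S: "S \<in> carrier_mat n n"
    and "det A \<noteq> 0" and "det B \<noteq> 0"
    and AR: "A\<^sup>T * R = B\<^sup>T * Q" and sym: "(A\<^sup>T * S * B)\<^sup>T = A\<^sup>T * S * B"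
  shows "Q * (cof R)\<^sup>T * S = S\<^sup>T * cof R * Q\<^sup>T"
    and "S * cof Q * R\<^sup>T = R * (cof Q)\<^sup>T * S\<^sup>T"
proof -
  note transpose = transpose_mult[of _ n n _ n] and assoc = assoc_mult_mat[of _ n n _ n _ n]
  have "(Q * adj_mat R * S)\<^sup>T = Q * adj_mat R * S"
    by (rule symmetric_mult_adj_mat[OF A B Q R S \<open>det B \<noteq> 0\<close> AR sym])
  moreover have "(Q * adj_mat R * S)\<^sup>T = S\<^sup>T * cof R * Q\<^sup>T"
    using Q R S adj_mat(1)[OF R] transpose_cof[OF R, symmetric] by (simp add: transpose assoc)
  ultimately show "Q * (cof R)\<^sup>T * S = S\<^sup>T * cof R * Q\<^sup>T"
    by (simp add: transpose_cof[OF R])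
  have "(B\<^sup>T * S\<^sup>T * A)\<^sup>T = B\<^sup>T * S\<^sup>T * A"
    using sym A B S by (metis transpose assoc transpose_transpose transpose_carrier_mat mult_carrier_mat)
  then have "(R * adj_mat Q * S\<^sup>T)\<^sup>T = R * adj_mat Q * S\<^sup>T"
    using symmetric_mult_adj_mat[OF B A R Q _ \<open>det A \<noteq> 0\<close> AR[symmetric]] S by simp
  moreover have "(R * adj_mat Q * S\<^sup>T)\<^sup>T = S * cof Q * R\<^sup>T"
    using Q R S adj_mat(1)[OF Q] transpose_cof[OF Q, symmetric] by (simp add: transpose assoc)
  ultimately show "S * cof Q * R\<^sup>T = R * (cof Q)\<^sup>T * S\<^sup>T"
    by (simp add: transpose_cof[OF Q])
qed

lemma ent_act_0: "ent (act \<kappa> P 0 M) i j k = (\<Sum>l<\<kappa>. ent P l j k * M $$ (l, i))"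
  by (simp add: act_def ent_def fun_upd_twist)

lemma ent_act_1: "ent (act \<kappa> P 1 M) i j k = (\<Sum>m<\<kappa>. ent P i m k * M $$ (m, j))"
  by (simp add: act_def ent_def fun_upd_twist)

lemma ent_act_2: "ent (act \<kappa> P 2 M) i j k = (\<Sum>n<\<kappa>. ent P i j n * M $$ (n, k))"
  by (simp add: act_def ent_def fun_upd_twist)

lemma ent_cong:
  assumes "\<forall>s\<in>states \<kappa> taxa. P s = P' s" and "i < \<kappa>" "j < \<kappa>" "k < \<kappa>"
  shows "ent P i j k = ent P' i j k"
  using assms by (auto simp: ent_def states_def taxa_def PiE_def extensional_def)

lemma ent_act_act_act:
  assumes "A \<in> carrier_mat \<kappa> \<kappa>" "B \<in> carrier_mat \<kappa> \<kappa>" "i < \<kappa>" "j < \<kappa>"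
  shows "ent (act \<kappa> (act \<kappa> (act \<kappa> P 0 A) 1 B) 2 C) i j k
    = (\<Sum>n<\<kappa>. (A\<^sup>T * slice_c \<kappa> P n * B) $$ (i, j) * C $$ (n, k))"
  unfolding ent_act_2 ent_act_1 ent_act_0
  using assms by (simp add: slice_c_def scalar_prod_def lessThan_atLeast0 sum_distrib_right
      mult.commute mult.left_commute)

lemma marg_taxa: "s \<in> states \<kappa> taxa \<Longrightarrow> marg \<kappa> taxa P s = P s"
proof -
  assume s: "s \<in> states \<kappa> taxa"
  then have "{t \<in> states \<kappa> taxa. restrict t taxa = s} = {s}"
    by (auto simp: states_def)
  then show ?thesis by (simp add: marg_def)
qed

lemma ent_swap_of_UE:
  assumes "P \<in> UE \<kappa>" and "i < \<kappa>" "j < \<kappa>" "k < \<kappa>"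
  shows "ent P j i k = ent P i j k"
proof -
  let ?s = "(\<lambda>_. undefined)(0 := i, 1 := j, 2 := k) :: nat \<Rightarrow> nat"
  have s: "?s \<in> states \<kappa> taxa"
    using assms by (auto simp: states_def taxa_def PiE_def extensional_def)
  have "{0, 1} \<in> two_clades taxa"
    unfolding two_clades_def tree_clusters_def taxa_def by (rule CollectI, rule exI[of _ "{0,1}"]) auto
  moreover have "\<forall>x y. {x, y} \<in> two_clades taxa \<longrightarrow>
      (\<forall>s\<in>states \<kappa> taxa. marg \<kappa> taxa P (s(x := s y, y := s x)) = marg \<kappa> taxa P s)"
    using assms(1) unfolding UE_def by blast
  ultimately have "marg \<kappa> taxa P (?s(0 := ?s 1, 1 := ?s 0)) = marg \<kappa> taxa P ?s"
    using s by blast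
  moreover have "?s(0 := ?s 1, 1 := ?s 0) = (\<lambda>_. undefined)(0 := j, 1 := i, 2 := k)"
    by (auto intro!: ext)
  moreover have "(\<lambda>_. undefined)(0 := j, 1 := i, 2 := k) \<in> states \<kappa> taxa"
    using assms by (auto simp: states_def taxa_def PiE_def extensional_def)
  ultimately show ?thesis using s by (simp add: marg_taxa ent_def)
qed

lemma markov_mult_ones: "markov \<kappa> M \<Longrightarrow> M *\<^sub>v vec \<kappa> (\<lambda>_. 1) = vec \<kappa> (\<lambda>_. 1)"
  by (auto simp: markov_def scalar_prod_def lessThan_atLeast0)

lemma slice_c_mult_ones:
  "k < \<kappa> \<Longrightarrow> slice_c \<kappa> P k *\<^sub>v vec \<kappa> (\<lambda>_. 1) = col (marg_b \<kappa> P) k"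
  by (auto simp: slice_c_def marg_b_def scalar_prod_def lessThan_atLeast0)

lemma transpose_slice_c_mult_ones:
  "k < \<kappa> \<Longrightarrow> (slice_c \<kappa> P k)\<^sup>T *\<^sub>v vec \<kappa> (\<lambda>_. 1) = col (marg_a \<kappa> P) k"
  by (auto simp: slice_c_def marg_a_def scalar_prod_def lessThan_atLeast0)

lemma congruent_slices_symmetric:
  assumes A: "A \<in> carrier_mat \<kappa> \<kappa>" and B: "B \<in> carrier_mat \<kappa> \<kappa>"
    and C: "C \<in> carrier_mat \<kappa> \<kappa>" and "det C \<noteq> 0" and UE: "Pt \<in> UE \<kappa>"
    and act: "\<forall>s\<in>states \<kappa> taxa. act \<kappa> (act \<kappa> (act \<kappa> P 0 A) 1 B) 2 C s = Pt s"
    and "n < \<kappa>"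
  shows "(A\<^sup>T * slice_c \<kappa> P n * B)\<^sup>T = A\<^sup>T * slice_c \<kappa> P n * B"
proof (rule eq_matI)
  define Z where "Z m = A\<^sup>T * slice_c \<kappa> P m * B" for m
  fix i j assume "i < dim_row (Z n)" "j < dim_col (Z n)"
  then have ij: "i < \<kappa>" "j < \<kappa>" using A B by (auto simp: Z_def)
  have slices_Pt: "ent Pt i' j' k = (\<Sum>m<\<kappa>. Z m $$ (i', j') * C $$ (m, k))"
    if "i' < \<kappa>" "j' < \<kappa>" "k < \<kappa>" for i' j' k
    using ent_cong[OF act that] ent_act_act_act[OF A B that(1,2)] by (simp add: Z_def)
  define v where "v = vec \<kappa> (\<lambda>m. Z m $$ (i, j) - Z m $$ (j, i))"
  have "C\<^sup>T *\<^sub>v v = 0\<^sub>v \<kappa>"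
  proof (rule eq_vecI)
    fix k assume "k < dim_vec (0\<^sub>v \<kappa> :: real vec)"
    then have k: "k < \<kappa>" by simp
    have "(C\<^sup>T *\<^sub>v v) $ k = ent Pt i j k - ent Pt j i k"
      using C ij k unfolding v_def
      by (simp add: slices_Pt scalar_prod_def lessThan_atLeast0 sum_subtractf algebra_simps)
    then show "(C\<^sup>T *\<^sub>v v) $ k = 0\<^sub>v \<kappa> $ k"
      using ent_swap_of_UE[OF UE ij k] k by simp
  qed (use C in simp)
  moreover have "\<not> (\<exists>w. w \<in> carrier_vec \<kappa> \<and> w \<noteq> 0\<^sub>v \<kappa> \<and> C\<^sup>T *\<^sub>v w = 0\<^sub>v \<kappa>)"
    using det_0_iff_vec_prod_zero[of "C\<^sup>T" \<kappa>] det_transpose[OF C] assms(4) C by simp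
  moreover have "v \<in> carrier_vec \<kappa>" unfolding v_def by simp
  ultimately have "v = 0\<^sub>v \<kappa>" by blast
  then show "(Z n)\<^sup>T $$ (i, j) = Z n $$ (i, j)"
    using ij assms(7) A B unfolding v_def Z_def by (auto simp: vec_eq_iff)
qed (use A B in auto)

lemma marginals_intertwined:
  assumes mA: "markov \<kappa> A" and mB: "markov \<kappa> B"
    and sym: "\<forall>n<\<kappa>. (A\<^sup>T * slice_c \<kappa> P n * B)\<^sup>T = A\<^sup>T * slice_c \<kappa> P n * B"
  shows "A\<^sup>T * marg_b \<kappa> P = B\<^sup>T * marg_a \<kappa> P"
proof (rule mat_col_eqI)
  have A: "A \<in> carrier_mat \<kappa> \<kappa>" and B: "B \<in> carrier_mat \<kappa> \<kappa>"
    using mA mB by (auto simp: markov_def)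
  let ?S = "slice_c \<kappa> P" and ?one = "vec \<kappa> (\<lambda>_. 1) :: real vec"
  have S: "?S n \<in> carrier_mat \<kappa> \<kappa>" for n by (simp add: slice_c_def)
  have Q: "marg_a \<kappa> P \<in> carrier_mat \<kappa> \<kappa>" and R: "marg_b \<kappa> P \<in> carrier_mat \<kappa> \<kappa>"
    by (simp_all add: marg_a_def marg_b_def)
  fix n assume "n < dim_col (B\<^sup>T * marg_a \<kappa> P)"
  then have n: "n < \<kappa>" by (simp add: marg_a_def)
  have "col (A\<^sup>T * marg_b \<kappa> P) n = A\<^sup>T *\<^sub>v (?S n *\<^sub>v (B *\<^sub>v ?one))"
    using A n by (subst col_mult2[OF _ R n])
      (simp_all add: markov_mult_ones[OF mB] slice_c_mult_ones)
  also have "\<dots> = (A\<^sup>T * ?S n * B) *\<^sub>v ?one"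
    using A B S by (simp add: assoc_mult_mat_vec[of _ \<kappa> \<kappa> _ \<kappa>])
  also have "\<dots> = (A\<^sup>T * ?S n * B)\<^sup>T *\<^sub>v ?one"
    using sym n by simp
  also have "(A\<^sup>T * ?S n * B)\<^sup>T = B\<^sup>T * ((?S n)\<^sup>T * A)"
    using A B S by (simp add: transpose_mult[of _ \<kappa> \<kappa> _ \<kappa>])
  also have "\<dots> *\<^sub>v ?one = B\<^sup>T *\<^sub>v ((?S n)\<^sup>T *\<^sub>v (A *\<^sub>v ?one))"
    using A B S[of n] by (simp add: assoc_mult_mat_vec[of "B\<^sup>T" \<kappa> \<kappa> "(?S n)\<^sup>T * A" \<kappa>]
        assoc_mult_mat_vec[of "(?S n)\<^sup>T" \<kappa> \<kappa> A \<kappa>])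
  also have "\<dots> = col (B\<^sup>T * marg_a \<kappa> P) n"
    using B n by (subst col_mult2[OF _ Q n])
      (simp_all add: markov_mult_ones[OF mA] transpose_slice_c_mult_ones)
  finally show "col (A\<^sup>T * marg_b \<kappa> P) n = col (B\<^sup>T * marg_a \<kappa> P) n" .
qed (use mA mB in \<open>auto simp: markov_def marg_a_def marg_b_def\<close>)

theorem corollary6p2:
  fixes \<kappa> :: nat and P :: "(nat \<Rightarrow> nat) \<Rightarrow> real"
  assumes "\<kappa> \<ge> 2" and "P \<in> EE \<kappa>"
  shows "\<forall>k<\<kappa>.
     marg_a \<kappa> P * transpose_mat (cof (marg_b \<kappa> P)) * slice_c \<kappa> P k
       - transpose_mat (slice_c \<kappa> P k) * cof (marg_b \<kappa> P) * transpose_mat (marg_a \<kappa> P)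
       = 0\<^sub>m \<kappa> \<kappa> \<and>
     slice_c \<kappa> P k * cof (marg_a \<kappa> P) * transpose_mat (marg_b \<kappa> P)
       - marg_b \<kappa> P * transpose_mat (cof (marg_a \<kappa> P)) * transpose_mat (slice_c \<kappa> P k)
       = 0\<^sub>m \<kappa> \<kappa>"
proof (intro allI impI conjI)
  fix k assume "k < \<kappa>"
  obtain A B C Pt where mA: "markov \<kappa> A" and mB: "markov \<kappa> B" and mC: "markov \<kappa> C"
    and "det A \<noteq> 0" "det B \<noteq> 0" "det C \<noteq> 0" and "Pt \<in> UE \<kappa>"
    and "\<forall>s\<in>states \<kappa> taxa. act \<kappa> (act \<kappa> (act \<kappa> P 0 A) 1 B) 2 C s = Pt s"
    using assms(2) unfolding EE_def by blast
  moreover have A: "A \<in> carrier_mat \<kappa> \<kappa>" and B: "B \<in> carrier_mat \<kappa> \<kappa>" and "C \<in> carrier_mat \<kappa> \<kappa>"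
    using mA mB mC by (auto simp: markov_def)
  ultimately have sym: "\<forall>n<\<kappa>. (A\<^sup>T * slice_c \<kappa> P n * B)\<^sup>T = A\<^sup>T * slice_c \<kappa> P n * B"
    using congruent_slices_symmetric by blast
  have Q: "marg_a \<kappa> P \<in> carrier_mat \<kappa> \<kappa>" and R: "marg_b \<kappa> P \<in> carrier_mat \<kappa> \<kappa>"
    and S: "slice_c \<kappa> P k \<in> carrier_mat \<kappa> \<kappa>"
    by (simp_all add: marg_a_def marg_b_def slice_c_def)
  note identities = cof_commutation_identities[OF A B Q R S \<open>det A \<noteq> 0\<close> \<open>det B \<noteq> 0\<close>
      marginals_intertwined[OF mA mB sym] sym[rule_format, OF \<open>k < \<kappa>\<close>]]
  show "marg_a \<kappa> P * (cof (marg_b \<kappa> P))\<^sup>T * slice_c \<kappa> P k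
      - (slice_c \<kappa> P k)\<^sup>T * cof (marg_b \<kappa> P) * (marg_a \<kappa> P)\<^sup>T = 0\<^sub>m \<kappa> \<kappa>"
    using Q S cof_carrier_mat[OF R] by (simp add: identities(1) minus_r_inv_mat)
  show "slice_c \<kappa> P k * cof (marg_a \<kappa> P) * (marg_b \<kappa> P)\<^sup>T
      - marg_b \<kappa> P * (cof (marg_a \<kappa> P))\<^sup>T * (slice_c \<kappa> P k)\<^sup>T = 0\<^sub>m \<kappa> \<kappa>"
    using R S cof_carrier_mat[OF Q] by (simp add: identities(2) minus_r_inv_mat)
qed

end
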